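(* Let $d\ge1$, $x_1<x_2$, $x_0\in[x_1,x_2]$, let $p,r_1,\dots,r_d$ be functions on $[x_1,x_2]$ and $u_0$ a nonvanishing function on $[x_1,x_2]$ such that $M_0=\sup_{[x_1,x_2]}\frac{1}{|pu_0^2|}$ and $M_i=\sup_{[x_1,x_2]}|r_iu_0^2|$ ($i=1,\dots,d$) are finite. Then for every admissible $\mathbf j=\mathbf m+\frac1d\mathbf 1$ with $\mathbf m\in\mathbb Z_{\ge0}^d$ and every $x\in[x_1,x_2]$, $$|X^{(\mathbf j)}(x)|\le c_{\mathbf j}\,M_0^{\left[\frac{|\mathbf j|+1}{2}\right]}M_1^{\left[\frac{j_1-1/d+1}{2}\right]}\cdots M_d^{\left[\frac{j_d-1/d+1}{2}\right]}\,|x-x_0|^{|\mathbf j|}.$$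
   Context: $[a]$ denotes the greatest integer not exceeding $a$. Notation: $\int f$ denotes $x\mapsto\int_{x_0}^x f(s)\,ds$; $|\mathbf j|=j_1+\cdots+j_d$; $\delta_i$ the $i$-th standard basis vector; $\mathbf 1=(1,\dots,1)$. Formal powers $X$ are indexed by $\mathbf j=\mathbf m+\frac1d\mathbf 1$ with $\mathbf m\in\mathbb Z^d$ (so $|\mathbf j|=|\mathbf m|+1$); $\mathbf j$ is admissible if at most one $m_i$ is odd. Set $X^{(\frac1d\mathbf 1-\delta_i)}\equiv\frac1d$ ($i=1,\dots,d$); $X^{(\mathbf m+\frac1d\mathbf 1)}\equiv0$ if some $m_i<0$ and $\mathbf m\notin\{-\delta_1,\dots,-\delta_d\}$; for admissible $\mathbf j$ with $\mathbf m\ge0$: if $|\mathbf j|$ is even (exactly one $m_i$ odd), $X^{(\mathbf j)}=|\mathbf j|\int r_iu_0^2X^{(\mathbf j-\delta_i)}$ for that $i$; if $|\mathbf j|$ is odd, $X^{(\mathbf j)}=|\mathbf j|\int\frac{1}{pu_0^2}\sum_{i=1}^dX^{(\mathbf j-\delta_i)}$. The numbers $c_{\mathbf j}$ are defined by $c_{\frac1d\mathbf 1-\delta_i}=1$, $c_{\mathbf m+\frac1d\mathbf 1}=0$ if some $m_i<0$ and $\mathbf m\notin\{-\delta_1,\dots,-\delta_d\}$, and for admissible $\mathbf j$ with $\mathbf m\ge0$: $c_{\mathbf j}=c_{\mathbf j-\delta_i}$ if $|\mathbf j|$ is even (with $m_i$ the odd entry), $c_{\mathbf j}=\sum_{i=1}^dc_{\mathbf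 j-\delta_i}$ if $|\mathbf j|$ is odd. *)

theory Defs
  imports "HOL-Analysis.Analysis"
begin

text \<open>Multi-indices m in Z^d are vectors of type int^'n with d = CARD('n).
  The formal index j = m + (1/d) 1 is represented by m; |j| = |m| + 1.\<close>

definition delta :: "'n::finite \<Rightarrow> int^'n" where
  "delta i = (\<chi> k. if k = i then 1 else 0)"

definition msum :: "int^'n::finite \<Rightarrow> int" where
  "msum m = (\<Sum>i\<in>UNIV. m $ i)"

definition admissible :: "int^'n::finite \<Rightarrow> bool" where
  "admissible m \<longleftrightarrow> card {i. odd (m $ i)} \<le> 1"

definition oint :: "real \<Rightarrow> real \<Rightarrow> (real \<Rightarrow> real) \<Rightarrow> real" where
  "oint a b f = (if a \<le> b then integral {a..b} f else - integral {b..a} f)"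

lemma msum_minus_delta: "msum (m - delta i) = msum m - 1"
  by (simp add: msum_def delta_def sum_subtractf)

lemma msum_nonneg: "\<forall>i. 0 \<le> m $ i \<Longrightarrow> 0 \<le> msum m"
  by (simp add: msum_def sum_nonneg)

function Xfun :: "(real \<Rightarrow> real) \<Rightarrow> ('n::finite \<Rightarrow> real \<Rightarrow> real) \<Rightarrow> (real \<Rightarrow> real)
    \<Rightarrow> real \<Rightarrow> int^'n \<Rightarrow> real \<Rightarrow> real" where
  "Xfun p r u0 x0 m =
    (if \<exists>i. m = - delta i then (\<lambda>x. 1 / real CARD('n))
     else if \<not> (\<forall>i. 0 \<le> m $ i) then (\<lambda>x. 0)
     else if \<not> admissible m then (\<lambda>x. 0)
     else if odd (msum m) then
       (\<lambda>x. real_of_int (msum m + 1) *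
          oint x0 x (\<lambda>s. r (THE i. odd (m $ i)) s * (u0 s)\<^sup>2 *
                         Xfun p r u0 x0 (m - delta (THE i. odd (m $ i))) s))
     else
       (\<lambda>x. real_of_int (msum m + 1) *
          oint x0 x (\<lambda>s. 1 / (p s * (u0 s)\<^sup>2) *
                         (\<Sum>i\<in>UNIV. Xfun p r u0 x0 (m - delta i) s))))"
  by pat_completeness auto
termination
  by (relation "Wellfounded.measure (\<lambda>(p, r, u0, x0, m). nat (msum m + 1))")
     (auto simp: msum_minus_delta dest: msum_nonneg)

function cfun :: "int^'n::finite \<Rightarrow> nat" where
  "cfun m =
    (if \<exists>i. m = - delta i then 1
     else if \<not> (\<forall>i. 0 \<le> m $ i) then 0
     else if \<not> admissible m then 0
     else if odd (msum m) then cfun (m - delta (THE i. odd (m $ i)))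
     else (\<Sum>i\<in>UNIV. cfun (m - delta i)))"
  by pat_completeness auto
termination
  by (relation "Wellfounded.measure (\<lambda>m. nat (msum m + 1))")
     (auto simp: msum_minus_delta dest: msum_nonneg)

end

theory Submission
  imports Defs
begin

text \<open>Every recursive step multiplies by \<open>|j|\<close> an integral from \<open>x\<^sub>0\<close>
  whose integrand is bounded by \<open>C |s - x\<^sub>0|\<^bsup>|j|-1\<^esup>\<close>, which produces exactly
  \<open>C |x - x\<^sub>0|\<^bsup>|j|\<^esup>\<close>. Along the way \<open>C\<close> picks up a factor \<open>M\<^sub>i\<close> at each step
  through \<open>r\<^sub>i u\<^sub>0\<^sup>2\<close> and a factor \<open>M\<^sub>0\<close> at each step through \<open>1/(p u\<^sub>0\<^sup>2)\<close>; counting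
  these steps gives the exponents, and the numerical prefactors add up exactly as the \<open>c\<^sub>j\<close> do.\<close>

lemma has_integral_power_dist_from_endpoint:
  fixes x0 x :: real
  shows "((\<lambda>s. \<bar>s - x0\<bar> ^ n) has_integral \<bar>x - x0\<bar> ^ Suc n / real (Suc n)) (closed_segment x0 x)"
proof (cases "x0 \<le> x")
  case True
  have "((\<lambda>s. (s - x0) ^ Suc n / real (Suc n)) has_real_derivative (s - x0) ^ n) (at s)" for s
    by (auto intro!: derivative_eq_intros simp del: power_Suc)
  then have "((\<lambda>s. (s - x0) ^ n) has_integral (x - x0) ^ Suc n / real (Suc n)) {x0..x}"
    using fundamental_theorem_of_calculus[OF True, of "\<lambda>s. (s - x0) ^ Suc n / real (Suc n)"]
    by (simp add: has_real_derivative_iff_has_vector_derivative[symmetric] has_field_derivative_at_within)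
  then show ?thesis
    using True by (simp add: closed_segment_eq_real_ivl) (rule has_integral_eq; simp)
next
  case False
  have "((\<lambda>s. - ((x0 - s) ^ Suc n / real (Suc n))) has_real_derivative (x0 - s) ^ n) (at s)" for s
    by (auto intro!: derivative_eq_intros simp del: power_Suc)
  then have "((\<lambda>s. (x0 - s) ^ n) has_integral (x0 - x) ^ Suc n / real (Suc n)) {x..x0}"
    using False fundamental_theorem_of_calculus[of x x0 "\<lambda>s. - ((x0 - s) ^ Suc n / real (Suc n))"]
    by (simp add: has_real_derivative_iff_has_vector_derivative[symmetric] has_field_derivative_at_within)
  then show ?thesis
    using False by (simp add: closed_segment_eq_real_ivl abs_minus_commute) (rule has_integral_eq; simp)
qed

lemma abs_oint: "\<bar>oint a b f\<bar> = \<bar>integral (closed_segment a b) f\<bar>"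
  by (simp add: oint_def closed_segment_eq_real_ivl)

lemma oint_power_bound:
  fixes f :: "real \<Rightarrow> real"
  assumes "0 \<le> C" and bound: "\<And>s. s \<in> closed_segment x0 x \<Longrightarrow> \<bar>f s\<bar> \<le> C * \<bar>s - x0\<bar> ^ n"
  shows "real (Suc n) * \<bar>oint x0 x f\<bar> \<le> C * \<bar>x - x0\<bar> ^ Suc n"
proof -
  have majorant: "((\<lambda>s. C * \<bar>s - x0\<bar> ^ n) has_integral C * (\<bar>x - x0\<bar> ^ Suc n / real (Suc n)))
      (closed_segment x0 x)"
    by (intro has_integral_mult_right has_integral_power_dist_from_endpoint)
  have "\<bar>integral (closed_segment x0 x) f\<bar> \<le> C * (\<bar>x - x0\<bar> ^ Suc n / real (Suc n))"
  proof (cases "f integrable_on closed_segment x0 x")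
    case True
    then show ?thesis
      using integral_norm_bound_integral[OF True] majorant bound integral_unique[OF majorant]
      by (metis has_integral_integrable real_norm_def)
  qed (use \<open>0 \<le> C\<close> in \<open>simp add: not_integrable_integral\<close>)
  then show ?thesis
    by (simp add: abs_oint field_simps)
qed

declare Xfun.simps[simp del] cfun.simps[simp del]

lemma msum_neg_delta: "msum (- delta i :: int^'n::finite) = -1"
  by (simp add: msum_def delta_def sum_negf)

lemma neg_delta_not_nonneg: "\<forall>k. 0 \<le> m $ k \<Longrightarrow> m \<noteq> - delta i"
  by (auto simp: delta_def dest!: spec[of _ i])

lemma admissible_odd_unique:
  "admissible m \<Longrightarrow> odd (m $ i) \<Longrightarrow> odd (m $ k) \<Longrightarrow> i = k"
  using card_le_Suc0_iff_eq[of "{i. odd (m $ i)}"] by (auto simp: admissible_def)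

lemma admissible_odd_msum_iff:
  assumes "admissible m"
  shows "odd (msum m) \<longleftrightarrow> (\<exists>i. odd (m $ i))"
proof -
  have "odd (msum m) \<longleftrightarrow> card {i. odd (m $ i)} = 1"
    using assms by (auto simp: msum_def even_sum_iff admissible_def le_Suc_eq)
  also have "\<dots> \<longleftrightarrow> (\<exists>i. odd (m $ i))"
    using assms by (auto simp: admissible_def le_Suc_eq card_eq_0_iff card_Suc_eq)
  finally show ?thesis .
qed

lemma Xfun_neg_delta: "Xfun p r u0 x0 (- delta i :: int^'n::finite) x = 1 / real CARD('n)"
  by (subst Xfun.simps) auto

lemma Xfun_eq_0:
  assumes "\<forall>i. m \<noteq> - delta i" and "\<not> ((\<forall>k. 0 \<le> m $ k) \<and> admissible m)"
  shows "Xfun p r u0 x0 m x = 0"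
  using assms by (subst Xfun.simps) auto

lemma Xfun_odd:
  assumes "\<forall>k. 0 \<le> m $ k" and "admissible m" and "odd (m $ i)"
  shows "Xfun p r u0 x0 m x = real_of_int (msum m + 1) *
    oint x0 x (\<lambda>s. r i s * (u0 s)\<^sup>2 * Xfun p r u0 x0 (m - delta i) s)"
proof -
  have "(THE i. odd (m $ i)) = i"
    using assms(2,3) by (blast intro: admissible_odd_unique)
  then show ?thesis
    using assms neg_delta_not_nonneg[OF assms(1)] admissible_odd_msum_iff[OF assms(2)]
    by (subst Xfun.simps) auto
qed

lemma Xfun_even:
  assumes "\<forall>k. 0 \<le> m $ k" and "\<forall>k. even (m $ k)"
  shows "Xfun p r u0 x0 m x = real_of_int (msum m + 1) *
    oint x0 x (\<lambda>s. 1 / (p s * (u0 s)\<^sup>2) * (\<Sum>i\<in>UNIV. Xfun p r u0 x0 (m - delta i) s))"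
proof -
  have "even (msum m)"
    unfolding msum_def using assms(2) by (simp add: dvd_sum)
  then show ?thesis
    using assms neg_delta_not_nonneg[OF assms(1)] by (subst Xfun.simps) (simp add: admissible_def)
qed

lemma cfun_neg_delta: "cfun (- delta i) = 1"
  by (subst cfun.simps) auto

lemma cfun_odd:
  assumes "\<forall>k. 0 \<le> m $ k" and "admissible m" and "odd (m $ i)"
  shows "cfun m = cfun (m - delta i)"
proof -
  have "(THE i. odd (m $ i)) = i"
    using assms(2,3) by (blast intro: admissible_odd_unique)
  then show ?thesis
    using assms neg_delta_not_nonneg[OF assms(1)] admissible_odd_msum_iff[OF assms(2)]
    by (subst cfun.simps) auto
qed

lemma cfun_even:
  assumes "\<forall>k. 0 \<le> m $ k" and "\<forall>k. even (m $ k)"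
  shows "cfun m = (\<Sum>i\<in>UNIV. cfun (m - delta i))"
proof -
  have "even (msum m)"
    unfolding msum_def using assms(2) by (simp add: dvd_sum)
  then show ?thesis
    using assms neg_delta_not_nonneg[OF assms(1)] by (subst cfun.simps) (simp add: admissible_def)
qed

definition Xweight :: "real \<Rightarrow> ('n::finite \<Rightarrow> real) \<Rightarrow> int^'n \<Rightarrow> real" where
  "Xweight M0 M m = M0 ^ nat ((msum m + 2) div 2) * (\<Prod>i\<in>UNIV. M i ^ nat ((m $ i + 1) div 2))"

lemma Xweight_nonneg: "0 \<le> M0 \<Longrightarrow> (\<And>i. 0 \<le> M i) \<Longrightarrow> 0 \<le> Xweight M0 M m"
  by (simp add: Xweight_def prod_nonneg)

lemma Xweight_neg_delta: "Xweight M0 M (- delta i) = 1"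
  by (simp add: Xweight_def msum_neg_delta) (simp add: delta_def)

lemma Xweight_odd_step:
  assumes "0 \<le> m $ i" and "odd (m $ i)" and "odd (msum m)"
  shows "Xweight M0 M m = M i * Xweight M0 M (m - delta i)"
proof -
  have "nat ((m $ k + 1) div 2) = nat (((m - delta i) $ k + 1) div 2) + (if k = i then 1 else 0)" for k
    using assms(1,2) by (auto simp: delta_def elim!: oddE)
  then have "(\<Prod>k\<in>UNIV. M k ^ nat ((m $ k + 1) div 2))
      = (\<Prod>k\<in>UNIV. M k ^ nat (((m - delta i) $ k + 1) div 2) * (if k = i then M k else 1))"
    by (intro prod.cong) auto
  moreover have "(msum m + 2) div 2 = (msum (m - delta i) + 2) div 2"
    using assms(3) by (auto simp: msum_minus_delta elim!: oddE)
  ultimately show ?thesis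
    by (simp add: Xweight_def prod.distrib prod.delta)
qed

lemma Xweight_even_step:
  assumes "\<forall>k. even (m $ k)" and "0 \<le> msum m"
  shows "Xweight M0 M m = M0 * Xweight M0 M (m - delta i)"
proof -
  have "nat (((m - delta i) $ k + 1) div 2) = nat ((m $ k + 1) div 2)" for k
    using assms(1) by (auto simp: delta_def elim!: evenE)
  moreover have "even (msum m)"
    unfolding msum_def using assms(1) by (simp add: dvd_sum)
  then have "nat ((msum m + 2) div 2) = Suc (nat ((msum (m - delta i) + 2) div 2))"
    using assms(2) by (auto simp: msum_minus_delta elim!: evenE)
  ultimately show ?thesis
    by (simp add: Xweight_def)
qed

context
  fixes p u0 :: "real \<Rightarrow> real" and r :: "'n::finite \<Rightarrow> real \<Rightarrow> real"
    and a b x0 M0 :: real and M :: "'n \<Rightarrow> real"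
  assumes x0: "x0 \<in> {a..b}"
    and M0_bound: "\<And>y. y \<in> {a..b} \<Longrightarrow> 1 / \<bar>p y * (u0 y)\<^sup>2\<bar> \<le> M0"
    and M_bound: "\<And>i y. y \<in> {a..b} \<Longrightarrow> \<bar>r i y * (u0 y)\<^sup>2\<bar> \<le> M i"
begin

lemma M0_nonneg: "0 \<le> M0"
  using M0_bound[OF x0] by (smt (verit) divide_nonneg_nonneg abs_ge_zero)

lemma M_nonneg: "0 \<le> M i"
  using M_bound[OF x0, of i] by (smt (verit) abs_ge_zero)

abbreviation Xbound :: "int^'n \<Rightarrow> real \<Rightarrow> real" where
  "Xbound m x \<equiv> real (cfun m) * Xweight M0 M m * \<bar>x - x0\<bar> ^ nat (msum m + 1)"

lemma Xfun_bound_odd_step: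
  assumes nonneg: "\<forall>k. 0 \<le> m $ k" and adm: "admissible m" and odd: "odd (m $ i)"
    and IH: "\<And>s. s \<in> {a..b} \<Longrightarrow> \<bar>Xfun p r u0 x0 (m - delta i) s\<bar> \<le> Xbound (m - delta i) s"
    and x: "x \<in> {a..b}"
  shows "\<bar>Xfun p r u0 x0 m x\<bar> \<le> Xbound m x"
proof -
  define n where "n = nat (msum m)"
  define C where "C = M i * real (cfun (m - delta i)) * Xweight M0 M (m - delta i)"
  have ms: "0 \<le> msum m" using nonneg by (rule msum_nonneg)
  have "\<bar>Xfun p r u0 x0 m x\<bar>
      = real (Suc n) * \<bar>oint x0 x (\<lambda>s. r i s * (u0 s)\<^sup>2 * Xfun p r u0 x0 (m - delta i) s)\<bar>"
    using ms by (simp add: Xfun_odd[OF nonneg adm odd] abs_mult n_def add.commute)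
  also have "\<dots> \<le> C * \<bar>x - x0\<bar> ^ Suc n"
  proof (rule oint_power_bound)
    show "0 \<le> C"
      unfolding C_def by (simp add: M_nonneg M0_nonneg Xweight_nonneg)
    fix s assume "s \<in> closed_segment x0 x"
    then have s: "s \<in> {a..b}" using closed_segment_subset[OF x0 x] by auto
    have "\<bar>r i s * (u0 s)\<^sup>2 * Xfun p r u0 x0 (m - delta i) s\<bar>
        = \<bar>r i s * (u0 s)\<^sup>2\<bar> * \<bar>Xfun p r u0 x0 (m - delta i) s\<bar>"
      by (simp add: abs_mult)
    also have "\<dots> \<le> M i * Xbound (m - delta i) s"
      using IH[OF s] M_bound[OF s] M_nonneg by (intro mult_mono) auto
    finally show "\<bar>r i s * (u0 s)\<^sup>2 * Xfun p r u0 x0 (m - delta i) s\<bar> \<le> C * \<bar>s - x0\<bar> ^ n"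
      by (simp add: C_def n_def msum_minus_delta mult_ac)
  qed
  also have "\<dots> = Xbound m x"
  proof -
    have "Xweight M0 M m = M i * Xweight M0 M (m - delta i)"
      using nonneg odd admissible_odd_msum_iff[OF adm] by (blast intro: Xweight_odd_step)
    moreover have "nat (msum m + 1) = Suc n"
      using ms by (simp add: n_def)
    ultimately show ?thesis
      by (simp add: cfun_odd[OF nonneg adm odd] C_def)
  qed
  finally show ?thesis .
qed

lemma Xfun_bound_even_step:
  assumes nonneg: "\<forall>k. 0 \<le> m $ k" and even: "\<forall>k. even (m $ k)"
    and IH: "\<And>i s. s \<in> {a..b} \<Longrightarrow> \<bar>Xfun p r u0 x0 (m - delta i) s\<bar> \<le> Xbound (m - delta i) s"
    and x: "x \<in> {a..b}"
  shows "\<bar>Xfun p r u0 x0 m x\<bar> \<le> Xbound m x"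
proof -
  define n where "n = nat (msum m)"
  define C where "C = real (cfun m) * Xweight M0 M m"
  have ms: "0 \<le> msum m" using nonneg by (rule msum_nonneg)
  have weight: "M0 * real (cfun (m - delta i)) * Xweight M0 M (m - delta i)
      = real (cfun (m - delta i)) * Xweight M0 M m" for i
    using Xweight_even_step[OF even ms, of M0 M i] by simp
  have "\<bar>Xfun p r u0 x0 m x\<bar> = real (Suc n) *
      \<bar>oint x0 x (\<lambda>s. 1 / (p s * (u0 s)\<^sup>2) * (\<Sum>i\<in>UNIV. Xfun p r u0 x0 (m - delta i) s))\<bar>"
    using ms by (simp add: Xfun_even[OF nonneg even] abs_mult n_def add.commute)
  also have "\<dots> \<le> C * \<bar>x - x0\<bar> ^ Suc n"
  proof (rule oint_power_bound)
    show "0 \<le> C"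
      unfolding C_def by (simp add: M_nonneg M0_nonneg Xweight_nonneg)
    fix s assume "s \<in> closed_segment x0 x"
    then have s: "s \<in> {a..b}" using closed_segment_subset[OF x0 x] by auto
    have "\<bar>1 / (p s * (u0 s)\<^sup>2) * (\<Sum>i\<in>UNIV. Xfun p r u0 x0 (m - delta i) s)\<bar>
        = 1 / \<bar>p s * (u0 s)\<^sup>2\<bar> * \<bar>\<Sum>i\<in>UNIV. Xfun p r u0 x0 (m - delta i) s\<bar>"
      by (simp add: abs_mult)
    also have "\<dots> \<le> M0 * (\<Sum>i\<in>UNIV. Xbound (m - delta i) s)"
      using M0_bound[OF s] M0_nonneg IH[OF s]
      by (intro mult_mono order_trans[OF sum_abs sum_mono]) auto
    also have "\<dots> = C * \<bar>s - x0\<bar> ^ n"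
      by (simp add: C_def cfun_even[OF nonneg even] msum_minus_delta n_def
          sum_distrib_left sum_distrib_right mult.assoc[symmetric] weight)
    finally show "\<bar>1 / (p s * (u0 s)\<^sup>2) * (\<Sum>i\<in>UNIV. Xfun p r u0 x0 (m - delta i) s)\<bar>
        \<le> C * \<bar>s - x0\<bar> ^ n" .
  qed
  also have "\<dots> = Xbound m x"
    using ms by (simp add: C_def n_def Suc_nat_eq_nat_zadd1 add.commute)
  finally show ?thesis .
qed

lemma Xfun_bound:
  assumes "x \<in> {a..b}"
  shows "\<bar>Xfun p r u0 x0 m x\<bar> \<le> Xbound m x"
  using assms
proof (induction "nat (msum m + 1)" arbitrary: m x rule: less_induct)
  case less
  have IH: "\<bar>Xfun p r u0 x0 (m - delta i) s\<bar> \<le> Xbound (m - delta i) s"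
    if "\<forall>k. 0 \<le> m $ k" and "s \<in> {a..b}" for i s
    using less.hyps[of "m - delta i" s] that msum_nonneg[OF that(1)] by (simp add: msum_minus_delta)
  consider i where "m = - delta i"
    | "\<forall>i. m \<noteq> - delta i" "\<not> ((\<forall>k. 0 \<le> m $ k) \<and> admissible m)"
    | i where "\<forall>k. 0 \<le> m $ k" "admissible m" "odd (m $ i)"
    | "\<forall>k. 0 \<le> m $ k" "\<forall>k. even (m $ k)"
    by meson
  then show ?case
  proof cases
    case 1
    then show ?thesis
      by (simp add: Xfun_neg_delta cfun_neg_delta Xweight_neg_delta msum_neg_delta)
  next
    case 2
    then show ?thesis
      by (simp add: Xfun_eq_0 M0_nonneg M_nonneg Xweight_nonneg)
  next
    case 3
    then show ?thesis
      using IH less.prems by (blast intro: Xfun_bound_odd_step)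
  next
    case 4
    then show ?thesis
      using IH less.prems by (blast intro: Xfun_bound_even_step)
  qed
qed

end

theorem mainTheorem5:
  fixes p u0 :: "real \<Rightarrow> real" and r :: "'n::finite \<Rightarrow> real \<Rightarrow> real"
    and x1 x2 x0 x :: real and m :: "int^'n"
  assumes "x1 < x2" and "x0 \<in> {x1..x2}"
    and "\<forall>y\<in>{x1..x2}. u0 y \<noteq> 0"
    and "\<forall>y\<in>{x1..x2}. p y \<noteq> 0"
    and "bdd_above ((\<lambda>y. 1 / \<bar>p y * (u0 y)\<^sup>2\<bar>) ` {x1..x2})"
    and "\<forall>i. bdd_above ((\<lambda>y. \<bar>r i y * (u0 y)\<^sup>2\<bar>) ` {x1..x2})"
    and "\<forall>i. 0 \<le> m $ i" and "admissible m"
    and "x \<in> {x1..x2}"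
  shows "\<bar>Xfun p r u0 x0 m x\<bar> \<le>
      real (cfun m)
      * (SUP y\<in>{x1..x2}. 1 / \<bar>p y * (u0 y)\<^sup>2\<bar>) ^ nat ((msum m + 2) div 2)
      * (\<Prod>i\<in>UNIV. (SUP y\<in>{x1..x2}. \<bar>r i y * (u0 y)\<^sup>2\<bar>) ^ nat ((m $ i + 1) div 2))
      * \<bar>x - x0\<bar> ^ nat (msum m + 1)"
proof -
  have "\<bar>Xfun p r u0 x0 m x\<bar> \<le> real (cfun m)
      * Xweight (SUP y\<in>{x1..x2}. 1 / \<bar>p y * (u0 y)\<^sup>2\<bar>) (\<lambda>i. SUP y\<in>{x1..x2}. \<bar>r i y * (u0 y)\<^sup>2\<bar>) m
      * \<bar>x - x0\<bar> ^ nat (msum m + 1)"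
  proof (rule Xfun_bound)
    show "1 / \<bar>p y * (u0 y)\<^sup>2\<bar> \<le> (SUP y\<in>{x1..x2}. 1 / \<bar>p y * (u0 y)\<^sup>2\<bar>)" if "y \<in> {x1..x2}" for y
      by (rule cSUP_upper[OF that assms(5)])
    show "\<bar>r i y * (u0 y)\<^sup>2\<bar> \<le> (SUP y\<in>{x1..x2}. \<bar>r i y * (u0 y)\<^sup>2\<bar>)" if "y \<in> {x1..x2}" for i y
      using assms(6) by (intro cSUP_upper[OF that]) auto
  qed (use assms in auto)
  then show ?thesis
    by (simp add: Xweight_def mult.assoc)
qed

end
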